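(* Let $d\ge 2$ and let $\{\tau_e: e\in\mathcal E^d\}$ be i.i.d. non-negative edge weights on the nearest-neighbor edges $\mathcal E^d$ of $\mathbb Z^d$, satisfying the standing assumption described in the context. Fix $x\in\mathbb Z^d$ and let $\pi^{(x)}$ be the distinguished geodesic from $0$ to $x$. Then for any $t>0$ and any $e\in\mathcal E^d$, $$\mathbb P\big(\tau_e\le t \,\big|\, e\in \pi^{(x)}\big)\ \ge\ \mathbb P(\tau_e\le t).$$
   Context: Setting: $d\ge2$; $\mathcal E^d$ is the set of nearest-neighbor edges of $\mathbb Z^d$; $\{\tau_e\}$ are i.i.d. non-negative random variables with law $\mu$, distribution function $F$, and essential infimum $r$. Standing assumption: $F(r)<p_c(d)$ if $r=0$ and $F(r)<\vec p_c(d)$ if $r>0$, where $p_c(d)$ is the critical probability of Bernoulli bond percolation on $\mathbb Z^d$ and $\vec p_c(d)$ that of oriented bond percolation on $\mathbb Z^d$. The passage time of a path $\gamma$ is $T(\gamma)=\sum_{e\in\gamma}\tau_e$, and $T(x,y)=\inf T(\gamma)$ over vertex self-avoiding nearest-neighbor paths from $x$ to $y$. A geodesic from $x$ to $y$ is a vertex self-avoiding path $\gamma$ from $x$ to $y$ with $T(\gamma)=T(x,y)$. Fix an arbitrary deterministic ordering of all finite vertex self-avoiding lattice paths; $\pi^{(x)}$ denotes the first geodesic from $0$ to $x$ in this ordering. *)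

theory Defs
  imports "HOL-Probability.Probability"
begin

text \<open>Vertices of Z^d are integer vectors indexed by a finite type 'd, d = CARD('d).\<close>

definition unit_vec :: "'d::finite \<Rightarrow> int ^ 'd" where
  "unit_vec i = (\<chi> j. if j = i then 1 else 0)"

definition lattice_adj :: "int ^ 'd::finite \<Rightarrow> int ^ 'd \<Rightarrow> bool" where
  "lattice_adj x y \<longleftrightarrow> (\<exists>i. y = x + unit_vec i \<or> x = y + unit_vec i)"

definition lattice_edges :: "(int ^ 'd::finite) set set" where
  "lattice_edges = {{x, x + unit_vec i} | x i. True}"

definition sa_path :: "(int ^ 'd::finite) list \<Rightarrow> bool" where
  "sa_path vs \<longleftrightarrow> vs \<noteq> [] \<and> distinct vs \<and>
     (\<forall>k. Suc k < length vs \<longrightarrow> lattice_adj (vs ! k) (vs ! Suc k))"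

definition sa_path_from_to :: "int ^ 'd::finite \<Rightarrow> int ^ 'd \<Rightarrow> (int ^ 'd) list \<Rightarrow> bool" where
  "sa_path_from_to x y vs \<longleftrightarrow> sa_path vs \<and> hd vs = x \<and> last vs = y"

definition path_edges :: "'a list \<Rightarrow> 'a set list" where
  "path_edges vs = map (\<lambda>k. {vs ! k, vs ! Suc k}) [0..<length vs - 1]"

definition passage_time :: "('a set \<Rightarrow> real) \<Rightarrow> 'a list \<Rightarrow> real" where
  "passage_time w vs = sum_list (map w (path_edges vs))"

definition fpp_dist :: "((int ^ 'd::finite) set \<Rightarrow> real) \<Rightarrow> int ^ 'd \<Rightarrow> int ^ 'd \<Rightarrow> real" where
  "fpp_dist w x y = (INF vs \<in> {vs. sa_path_from_to x y vs}. passage_time w vs)"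

definition is_geodesic ::
  "((int ^ 'd::finite) set \<Rightarrow> real) \<Rightarrow> int ^ 'd \<Rightarrow> int ^ 'd \<Rightarrow> (int ^ 'd) list \<Rightarrow> bool" where
  "is_geodesic w x y vs \<longleftrightarrow> sa_path_from_to x y vs \<and> passage_time w vs = fpp_dist w x y"

text \<open>The deterministic ordering of all finite self-avoiding paths is an enumeration
  \<open>ord_rk\<close> (injective on self-avoiding paths).  The distinguished geodesic from 0 to x
  is the geodesic of least ord_rk; the predicate below says that it exists and
  contains the edge e.\<close>
definition edge_in_first_geodesic ::
  "((int ^ 'd::finite) list \<Rightarrow> nat) \<Rightarrow> ((int ^ 'd) set \<Rightarrow> real) \<Rightarrow> int ^ 'd \<Rightarrow> (int ^ 'd) set \<Rightarrow> bool" where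
  "edge_in_first_geodesic ord_rk w x e \<longleftrightarrow>
     (\<exists>g. is_geodesic w 0 x g \<and> (\<forall>g'. is_geodesic w 0 x g' \<longrightarrow> ord_rk g \<le> ord_rk g')
          \<and> e \<in> set (path_edges g))"

definition bond_perc_measure :: "real \<Rightarrow> ((int ^ 'd::finite) set \<Rightarrow> bool) measure" where
  "bond_perc_measure p = (\<Pi>\<^sub>M e \<in> lattice_edges. measure_pmf (bernoulli_pmf p))"

definition open_cluster :: "((int ^ 'd::finite) set \<Rightarrow> bool) \<Rightarrow> (int ^ 'd) set" where
  "open_cluster \<omega> = {y. \<exists>vs. sa_path_from_to 0 y vs \<and> (\<forall>e \<in> set (path_edges vs). \<omega> e)}"

definition oriented_cluster :: "((int ^ 'd::finite) set \<Rightarrow> bool) \<Rightarrow> (int ^ 'd) set" where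
  "oriented_cluster \<omega> = {y. \<exists>vs. vs \<noteq> [] \<and> hd vs = 0 \<and> last vs = y \<and>
      (\<forall>k. Suc k < length vs \<longrightarrow> (\<exists>i. vs ! Suc k = vs ! k + unit_vec i) \<and> \<omega> {vs ! k, vs ! Suc k})}"

definition p_c :: "'d::finite itself \<Rightarrow> real" where
  "p_c _ = Sup {p \<in> {0..1}. measure (bond_perc_measure p :: ((int ^ 'd) set \<Rightarrow> bool) measure)
                   {\<omega> \<in> space (bond_perc_measure p). infinite (open_cluster \<omega>)} = 0}"

definition vec_p_c :: "'d::finite itself \<Rightarrow> real" where
  "vec_p_c _ = Sup {p \<in> {0..1}. measure (bond_perc_measure p :: ((int ^ 'd) set \<Rightarrow> bool) measure)
                   {\<omega> \<in> space (bond_perc_measure p). infinite (oriented_cluster \<omega>)} = 0}"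

definition distr_fun :: "real measure \<Rightarrow> real \<Rightarrow> real" where
  "distr_fun \<mu> t = measure \<mu> {..t}"

definition ess_inf_law :: "real measure \<Rightarrow> real" where
  "ess_inf_law \<mu> = Sup {s. measure \<mu> {..<s} = 0}"

end

theory Submission
  imports Defs
begin

text \<open>Write \<open>A\<close> for the event that \<open>e\<close> lies on the first geodesic and \<open>C\<close> for the event
  that it would, were \<open>\<tau>\<^sub>e\<close> replaced by \<open>t\<close>.  Lowering the weight of an edge on the first
  geodesic keeps it first, so \<open>A\<close> is decreasing in \<open>\<tau>\<^sub>e\<close>; hence \<open>{\<tau>\<^sub>e \<le> t} \<inter> C \<subseteq> A\<close> and
  \<open>A - C \<subseteq> {\<tau>\<^sub>e \<le> t}\<close>.  As \<open>C\<close> only depends on the other weights, it is independent of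
  \<open>{\<tau>\<^sub>e \<le> t}\<close>, and these two inclusions yield the inequality.\<close>

lemma lattice_adj_imp_edge: "lattice_adj a b \<Longrightarrow> {a, b} \<in> lattice_edges"
  unfolding lattice_adj_def lattice_edges_def by (auto simp: insert_commute)

lemma set_path_edges_subset: "sa_path vs \<Longrightarrow> set (path_edges vs) \<subseteq> lattice_edges"
  unfolding path_edges_def sa_path_def by (auto intro: lattice_adj_imp_edge)

lemma distinct_path_edges:
  assumes "distinct vs"
  shows "distinct (path_edges vs)"
  unfolding path_edges_def distinct_map
proof (intro conjI inj_onI)
  fix k j assume "k \<in> set [0..<length vs - 1]" "j \<in> set [0..<length vs - 1]"
    and "{vs ! k, vs ! Suc k} = {vs ! j, vs ! Suc j}"
  then have "k = j \<and> Suc k = Suc j \<or> k = Suc j \<and> Suc k = j"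
    using assms by (auto simp: doubleton_eq_iff nth_eq_iff_index_eq)
  then show "k = j" by auto
qed simp

lemma passage_time_distinct:
  "distinct vs \<Longrightarrow> passage_time w vs = (\<Sum>f\<in>set (path_edges vs). w f)"
  unfolding passage_time_def by (simp add: distinct_path_edges sum_list_distinct_conv_sum_set)

lemma passage_time_diff_off_edge:
  assumes "distinct vs" and "\<forall>f. f \<noteq> e \<longrightarrow> w' f = w f"
  shows "passage_time w vs - passage_time w' vs = (if e \<in> set (path_edges vs) then w e - w' e else 0)"
proof -
  have "passage_time w vs - passage_time w' vs = (\<Sum>f\<in>set (path_edges vs). w f - w' f)"
    using assms(1) by (simp add: passage_time_distinct sum_subtractf)
  also have "\<dots> = (\<Sum>f\<in>set (path_edges vs). if f = e then w e - w' e else 0)"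
    using assms(2) by (intro sum.cong) auto
  finally show ?thesis
    by simp
qed

lemma passage_time_nonneg:
  assumes "sa_path vs" "\<forall>f\<in>lattice_edges. 0 \<le> w f"
  shows "0 \<le> passage_time w vs"
  unfolding passage_time_def using assms set_path_edges_subset
  by (intro sum_list_nonneg) auto

lemma is_geodesic_iff_minimal:
  assumes "\<forall>f\<in>lattice_edges. 0 \<le> w f"
  shows "is_geodesic w x y g \<longleftrightarrow>
           sa_path_from_to x y g \<and> (\<forall>g'. sa_path_from_to x y g' \<longrightarrow> passage_time w g \<le> passage_time w g')"
proof -
  let ?T = "passage_time w ` {g. sa_path_from_to x y g}"
  have "bdd_below ?T"
    using passage_time_nonneg[OF _ assms] by (intro bdd_belowI[of _ 0]) (auto simp: sa_path_from_to_def)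
  then show ?thesis
    unfolding is_geodesic_def fpp_dist_def
    by (auto intro: cINF_lower cInf_eq_minimum[symmetric])
qed

text \<open>An \<open>INF\<close>-free form of \<open>edge_in_first_geodesic\<close>, which makes measurability evident.\<close>
definition edge_in_first_minimal_path ::
  "((int ^ 'd::finite) list \<Rightarrow> nat) \<Rightarrow> ((int ^ 'd) set \<Rightarrow> real) \<Rightarrow> int ^ 'd \<Rightarrow> (int ^ 'd) set \<Rightarrow> bool" where
  "edge_in_first_minimal_path rk w x e \<longleftrightarrow>
     (\<exists>g. sa_path_from_to 0 x g \<and> e \<in> set (path_edges g) \<and>
        (\<forall>g'. sa_path_from_to 0 x g' \<longrightarrow> passage_time w g \<le> passage_time w g' \<and>
                (passage_time w g' = passage_time w g \<longrightarrow> rk g \<le> rk g')))"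

lemma edge_in_first_geodesic_iff_minimal:
  assumes "\<forall>f\<in>lattice_edges. 0 \<le> w f"
  shows "edge_in_first_geodesic rk w x e \<longleftrightarrow> edge_in_first_minimal_path rk w x e"
  unfolding edge_in_first_geodesic_def edge_in_first_minimal_path_def is_geodesic_iff_minimal[OF assms]
  by (metis order.antisym)

lemma edge_in_first_minimal_path_antimono:
  assumes "\<forall>f. f \<noteq> e \<longrightarrow> w' f = w f" and "w' e \<le> w e"
    and "edge_in_first_minimal_path rk w x e"
  shows "edge_in_first_minimal_path rk w' x e"
proof -
  obtain g where g: "sa_path_from_to 0 x g" "e \<in> set (path_edges g)"
    and min: "\<And>g'. sa_path_from_to 0 x g' \<Longrightarrow>
                passage_time w g \<le> passage_time w g' \<and>
                (passage_time w g' = passage_time w g \<longrightarrow> rk g \<le> rk g')"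
    using assms(3) unfolding edge_in_first_minimal_path_def by blast
  \<comment> \<open>\<open>g\<close> uses \<open>e\<close> exactly once, so lowering its weight shortens \<open>g\<close> at least as much as any \<open>g'\<close>.\<close>
  have "passage_time w' g - passage_time w' g' \<le> passage_time w g - passage_time w g'"
    if "sa_path_from_to 0 x g'" for g'
  proof -
    have "distinct g" "distinct g'"
      using g(1) that by (auto simp: sa_path_from_to_def sa_path_def)
    then show ?thesis
      using passage_time_diff_off_edge[OF _ assms(1), of g] passage_time_diff_off_edge[OF _ assms(1), of g']
        g(2) assms(2) by (auto split: if_splits)
  qed
  then have "passage_time w' g \<le> passage_time w' g' \<and>
               (passage_time w' g' = passage_time w' g \<longrightarrow> rk g \<le> rk g')"
    if "sa_path_from_to 0 x g'" for g'
    using min[OF that] that by fastforce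
  with g show ?thesis
    unfolding edge_in_first_minimal_path_def by blast
qed

lemma edge_in_first_minimal_path_fun_upd_le:
  "t \<le> w e \<Longrightarrow> edge_in_first_minimal_path rk w x e \<Longrightarrow> edge_in_first_minimal_path rk (w(e := t)) x e"
  by (rule edge_in_first_minimal_path_antimono) auto

lemma edge_in_first_minimal_path_fun_upd_ge:
  "w e \<le> t \<Longrightarrow> edge_in_first_minimal_path rk (w(e := t)) x e \<Longrightarrow> edge_in_first_minimal_path rk w x e"
  by (rule edge_in_first_minimal_path_antimono[of e _ "w(e := t)"]) auto

lemma edge_in_first_minimal_path_cong:
  assumes "\<And>f. f \<in> lattice_edges \<Longrightarrow> w f = w' f"
  shows "edge_in_first_minimal_path rk w x e \<longleftrightarrow> edge_in_first_minimal_path rk w' x e"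
proof -
  have "passage_time w g = passage_time w' g" if "sa_path_from_to 0 x g" for g
    using that set_path_edges_subset assms
    unfolding passage_time_def sa_path_from_to_def by (intro arg_cong[where f = sum_list]) auto
  then show ?thesis
    unfolding edge_in_first_minimal_path_def by (intro ex_cong1 conj_cong all_cong1 imp_cong) auto
qed

lemma measurable_edge_in_first_minimal_path:
  assumes "\<And>f. f \<in> lattice_edges \<Longrightarrow> (\<lambda>\<omega>. W \<omega> f) \<in> borel_measurable N"
  shows "Measurable.pred N (\<lambda>\<omega>. edge_in_first_minimal_path rk (W \<omega>) x e)"
proof -
  have [measurable]: "(\<lambda>\<omega>. passage_time (W \<omega>) g) \<in> borel_measurable N" if "sa_path_from_to 0 x g" for g
  proof -
    have "distinct g" "set (path_edges g) \<subseteq> lattice_edges"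
      using that set_path_edges_subset by (auto simp: sa_path_from_to_def sa_path_def)
    then show ?thesis
      using assms by (simp add: passage_time_distinct subset_iff)
  qed
  show ?thesis
    unfolding edge_in_first_minimal_path_def by measurable
qed

lemma (in prob_space) prob_mult_le_prob_Int_sandwich:
  assumes "A \<in> events" "B \<in> events" "C \<in> events"
    and indep: "prob (B \<inter> C) = prob B * prob C"
    and "B \<inter> C \<subseteq> A" "A - C \<subseteq> B"
  shows "prob B * prob A \<le> prob (B \<inter> A)"
proof -
  have "prob A = prob (A \<inter> C) + prob (A - C)"
    using assms finite_measure_Diff'[of A C] by simp
  then have "prob B * prob A = prob B * prob (A \<inter> C) + prob B * prob (A - C)"
    by (simp add: distrib_left)
  also have "\<dots> \<le> prob B * prob C + prob (A - C)"
    using assms by (intro add_mono mult_left_mono mult_left_le_one_le finite_measure_mono) auto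
  also have "\<dots> = prob (B \<inter> A)"
  proof -
    have "B \<inter> A = (B \<inter> C) \<union> (A - C)" using assms by blast
    moreover have "prob ((B \<inter> C) \<union> (A - C)) = prob (B \<inter> C) + prob (A - C)"
      using assms by (intro finite_measure_Union) auto
    ultimately show ?thesis
      using indep by simp
  qed
  finally show ?thesis .
qed

lemma (in prob_space) indep_vars_prob_coordinate_Int:
  assumes indep: "indep_vars (\<lambda>_. borel) X I" and "i \<in> I" and U: "U \<in> sets borel"
    and P: "Measurable.pred (PiM (I - {i}) (\<lambda>_. borel)) P"
  shows "prob ({\<omega> \<in> space M. X i \<omega> \<in> U} \<inter> {\<omega> \<in> space M. P (\<lambda>j\<in>I - {i}. X j \<omega>)})
           = prob {\<omega> \<in> space M. X i \<omega> \<in> U} * prob {\<omega> \<in> space M. P (\<lambda>j\<in>I - {i}. X j \<omega>)}"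
proof -
  let ?Xi = "\<lambda>\<omega>. \<lambda>j\<in>{i}. X j \<omega>" and ?Xrest = "\<lambda>\<omega>. \<lambda>j\<in>I - {i}. X j \<omega>"
  let ?U = "{y \<in> space (PiM {i} (\<lambda>_. borel)). y i \<in> U}"
    and ?P = "{y \<in> space (PiM (I - {i}) (\<lambda>_. borel)). P y}"
  have "indep_var (PiM {i} (\<lambda>_. borel)) ?Xi (PiM (I - {i}) (\<lambda>_. borel)) ?Xrest"
    using \<open>i \<in> I\<close> by (intro indep_var_restrict[OF indep]) auto
  moreover have "?U \<in> sets (PiM {i} (\<lambda>_. borel))"
    using U by measurable
  moreover have "?P \<in> sets (PiM (I - {i}) (\<lambda>_. borel))"
    using P by measurable
  ultimately have "prob ((\<lambda>\<omega>. (?Xi \<omega>, ?Xrest \<omega>)) -` (?U \<times> ?P) \<inter> space M)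
                     = prob (?Xi -` ?U \<inter> space M) * prob (?Xrest -` ?P \<inter> space M)"
    by (rule indep_varD)
  then show ?thesis
    by (simp add: space_PiM vimage_def Int_def conj_commute conj_left_commute)
qed

lemma (in prob_space) indep_edge_weight_first_minimal_path_fun_upd:
  fixes \<tau> :: "(int ^ 'd::finite) set \<Rightarrow> 'a \<Rightarrow> real"
  assumes indep: "indep_vars (\<lambda>_. borel) \<tau> lattice_edges" and e: "e \<in> lattice_edges"
    and "U \<in> sets borel"
  shows "prob ({\<omega> \<in> space M. \<tau> e \<omega> \<in> U}
                 \<inter> {\<omega> \<in> space M. edge_in_first_minimal_path rk ((\<lambda>f. \<tau> f \<omega>)(e := t)) x e})
           = prob {\<omega> \<in> space M. \<tau> e \<omega> \<in> U}
             * prob {\<omega> \<in> space M. edge_in_first_minimal_path rk ((\<lambda>f. \<tau> f \<omega>)(e := t)) x e}"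
proof -
  have "Measurable.pred (PiM (lattice_edges - {e}) (\<lambda>_. borel))
          (\<lambda>y. edge_in_first_minimal_path rk (y(e := t)) x e)"
  proof (intro measurable_edge_in_first_minimal_path)
    fix f :: "(int ^ 'd) set" assume "f \<in> lattice_edges"
    then show "(\<lambda>y. (y(e := t)) f) \<in> borel_measurable (PiM (lattice_edges - {e}) (\<lambda>_. borel))"
      by (cases "f = e") auto
  qed
  note indep_vars_prob_coordinate_Int[OF indep e assms(3) this]
  moreover have "edge_in_first_minimal_path rk ((\<lambda>f\<in>lattice_edges - {e}. \<tau> f \<omega>)(e := t)) x e
                  \<longleftrightarrow> edge_in_first_minimal_path rk ((\<lambda>f. \<tau> f \<omega>)(e := t)) x e" for \<omega>
    by (rule edge_in_first_minimal_path_cong) auto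
  ultimately show ?thesis
    by (simp only:)
qed

theorem lemma2p1:
  fixes M :: "'w measure"
    and \<tau> :: "(int ^ 'd::finite) set \<Rightarrow> 'w \<Rightarrow> real"
    and \<mu> :: "real measure"
    and ord_rk :: "(int ^ 'd) list \<Rightarrow> nat"
    and x :: "int ^ 'd" and e :: "(int ^ 'd) set" and t :: real
  assumes dim: "CARD('d) \<ge> 2"
    and M: "prob_space M"
    and mu: "prob_space \<mu>" "sets \<mu> = sets borel"
    and indep: "prob_space.indep_vars M (\<lambda>_. borel) \<tau> lattice_edges"
    and law: "\<forall>f \<in> lattice_edges. distr M borel (\<tau> f) = \<mu>"
    and nonneg: "\<forall>f \<in> lattice_edges. \<forall>\<omega> \<in> space M. 0 \<le> \<tau> f \<omega>"
    and standing: "(ess_inf_law \<mu> = 0 \<longrightarrow> distr_fun \<mu> (ess_inf_law \<mu>) < p_c TYPE('d))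
                 \<and> (ess_inf_law \<mu> > 0 \<longrightarrow> distr_fun \<mu> (ess_inf_law \<mu>) < vec_p_c TYPE('d))"
    and ord_rk: "inj_on ord_rk {vs. sa_path vs}"
    and e: "e \<in> lattice_edges"
    and t: "t > 0"
  shows "measure M {\<omega> \<in> space M. \<tau> e \<omega> \<le> t \<and> edge_in_first_geodesic ord_rk (\<lambda>f. \<tau> f \<omega>) x e}
         \<ge> measure M {\<omega> \<in> space M. \<tau> e \<omega> \<le> t}
           * measure M {\<omega> \<in> space M. edge_in_first_geodesic ord_rk (\<lambda>f. \<tau> f \<omega>) x e}"
proof -
  interpret prob_space M by (rule M)
  let ?first = "edge_in_first_minimal_path ord_rk"
  define A where "A = {\<omega> \<in> space M. ?first (\<lambda>f. \<tau> f \<omega>) x e}"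
  define B where "B = {\<omega> \<in> space M. \<tau> e \<omega> \<le> t}"
  define C where "C = {\<omega> \<in> space M. ?first ((\<lambda>f. \<tau> f \<omega>)(e := t)) x e}"
  have [measurable]: "\<tau> f \<in> borel_measurable M" if "f \<in> lattice_edges" for f
    using indep that unfolding indep_vars_def by auto
  have events: "A \<in> events" "B \<in> events" "C \<in> events"
    unfolding A_def B_def C_def using e
    by (auto intro!: measurable_edge_in_first_minimal_path[THEN predE])
  have "prob (B \<inter> C) = prob B * prob C"
    using indep_edge_weight_first_minimal_path_fun_upd[OF indep e, of "{..t}"] by (simp add: B_def C_def)
  moreover have "B \<inter> C \<subseteq> A" "A - C \<subseteq> B"
    by (auto simp: A_def B_def C_def
        intro: edge_in_first_minimal_path_fun_upd_ge edge_in_first_minimal_path_fun_upd_le)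
  ultimately have "prob B * prob A \<le> prob (B \<inter> A)"
    using events by (intro prob_mult_le_prob_Int_sandwich)
  moreover have "A = {\<omega> \<in> space M. edge_in_first_geodesic ord_rk (\<lambda>f. \<tau> f \<omega>) x e}"
    using nonneg by (auto simp: A_def edge_in_first_geodesic_iff_minimal)
  ultimately show ?thesis
    by (simp add: B_def Int_def conj_commute conj_left_commute)
qed

end
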